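(* Let $Q$ be a finite set with $|Q|\ge2$, let $0\le r\le m$ be integers, let $G_m$ be the subgroup of $\mathcal D_m$ generated by some $r$ of the elements $g_0,\dots,g_{m-1}$, let $W=\{w\in Q^{\mathcal D_m}: w(g+\cdot)=w(\cdot)\ \forall g\in G_m\}$, and let $\nu$ be the uniform probability measure on $W$ (regarded as a measure on $Q^{\mathcal D_m}$). Then for every sufficiently small $\varepsilon>0$ there are constants $0<c\le C$ depending only on $\varepsilon$ and $|Q|$ such that $c\,2^{m-r}\le \mathbb H_\varepsilon(Q^{\mathcal D_m},\nu,\operatorname{dist}_m)\le C\,2^{m-r}$ whenever $m-r$ is large enough; i.e. $\mathbb H_\varepsilon(Q^{\mathcal D_m},\nu,\operatorname{dist}_m)\asymp 2^{m-r}$ as $m-r\to\infty$.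
   Context: $\mathcal D=\bigoplus_{i\ge0}\mathbb Z/2\mathbb Z$ with generators $g_0,g_1,\dots$; $\mathcal D_m=\langle g_0,\dots,g_{m-1}\rangle$ (of order $2^m$). $\mathcal T_m$ is the group of bijections $S$ of $\mathcal D_m$ that, for each $0<j<m$, map every coset of $\mathcal D_j$ in $\mathcal D_m$ onto a coset of $\mathcal D_j$ (this group is isomorphic to the automorphism group of the binary tree of height $m$); it acts on $Q^{\mathcal D_m}$ by $(Sw)(g)=w(S^{-1}g)$. $d_H(w_1,w_2)=2^{-m}|\{g\in\mathcal D_m:w_1(g)\ne w_2(g)\}|$ is the normalized Hamming metric, and $\operatorname{dist}_m(w_1,w_2)=\min_{S\in\mathcal T_m}d_H(w_1,Sw_2)$. For a semimetric probability space, $\mathbb H_\varepsilon$ is the binary logarithm of the least $k$ such that the space can be partitioned into sets $X_0,\dots,X_k$ with measure of $X_0$ less than $\varepsilon$ and each $X_j$, $j\ge1$, of diameter less than $\varepsilon$. *)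

theory Defs
  imports "HOL-Probability.Probability" "HOL-Library.FuncSet"
begin

text \<open>Representation: an element of the group D_m is a finite set of indices
  A \<subseteq> {..<m} (the element sum of g_i for i in A); the group operation is
  symmetric difference, g_i corresponds to {i}, D_j corresponds to Pow {..<j}.\<close>

definition Dm :: "nat \<Rightarrow> nat set set" where
  "Dm m = Pow {..<m}"

definition dadd :: "nat set \<Rightarrow> nat set \<Rightarrow> nat set" where
  "dadd a b = (a - b) \<union> (b - a)"

definition gen :: "nat \<Rightarrow> nat set" where
  "gen i = {i}"

inductive_set dgen :: "nat set set \<Rightarrow> nat set set" for S where
  zero: "{} \<in> dgen S"
| step: "x \<in> S \<Longrightarrow> a \<in> dgen S \<Longrightarrow> dadd x a \<in> dgen S"

definition cosets :: "nat \<Rightarrow> nat \<Rightarrow> nat set set set" where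
  "cosets m j = {(\<lambda>b. dadd a b) ` Dm j | a. a \<in> Dm m}"

definition Tm :: "nat \<Rightarrow> (nat set \<Rightarrow> nat set) set" where
  "Tm m = {S. bij_betw S (Dm m) (Dm m) \<and>
              (\<forall>j. 0 < j \<and> j < m \<longrightarrow> (\<forall>C \<in> cosets m j. S ` C \<in> cosets m j))}"

text \<open>The configuration space Q^{D_m} (extensional functions), for Q = UNIV :: 'q set.\<close>
definition words :: "nat \<Rightarrow> (nat set \<Rightarrow> 'q) set" where
  "words m = Dm m \<rightarrow>\<^sub>E (UNIV :: 'q set)"

definition act :: "nat \<Rightarrow> (nat set \<Rightarrow> nat set) \<Rightarrow> (nat set \<Rightarrow> 'q) \<Rightarrow> (nat set \<Rightarrow> 'q)" where
  "act m S w = (\<lambda>g. if g \<in> Dm m then w (inv_into (Dm m) S g) else undefined)"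

definition dH :: "nat \<Rightarrow> (nat set \<Rightarrow> 'q) \<Rightarrow> (nat set \<Rightarrow> 'q) \<Rightarrow> real" where
  "dH m w1 w2 = real (card {g \<in> Dm m. w1 g \<noteq> w2 g}) / 2 ^ m"

definition dist_m :: "nat \<Rightarrow> (nat set \<Rightarrow> 'q) \<Rightarrow> (nat set \<Rightarrow> 'q) \<Rightarrow> real" where
  "dist_m m w1 w2 = Min ((\<lambda>S. dH m w1 (act m S w2)) ` Tm m)"

definition Wper :: "nat \<Rightarrow> nat set set \<Rightarrow> (nat set \<Rightarrow> 'q) set" where
  "Wper m G = {w \<in> words m. \<forall>g \<in> G. \<forall>h \<in> Dm m. w (dadd g h) = w h}"

definition diam_d :: "('a \<Rightarrow> 'a \<Rightarrow> real) \<Rightarrow> 'a set \<Rightarrow> real" where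
  "diam_d d A = (if A = {} then 0 else (SUP p \<in> A \<times> A. d (fst p) (snd p)))"

definition H_eps :: "'a set \<Rightarrow> 'a pmf \<Rightarrow> ('a \<Rightarrow> 'a \<Rightarrow> real) \<Rightarrow> real \<Rightarrow> real" where
  "H_eps X mu d eps = log 2 (real (LEAST k. \<exists>P :: nat \<Rightarrow> 'a set.
      (\<Union>i\<le>k. P i) = X \<and>
      (\<forall>i\<le>k. \<forall>j\<le>k. i \<noteq> j \<longrightarrow> P i \<inter> P j = {}) \<and>
      measure_pmf.prob mu (P 0) < eps \<and>
      (\<forall>j\<in>{1..k}. diam_d d (P j) < eps)))"

end

theory Submission
  imports Defs
begin

text \<open>A word in \<open>W\<close> is determined by its values on the \<open>N = 2 ^ (m - r)\<close> leaves
  \<open>Pow J\<close>, where \<open>J\<close> is the complement of \<open>I\<close>, so \<open>card W = q ^ N\<close>, and covering \<open>W\<close>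
  by singletons gives \<open>H_eps \<le> N * log 2 q\<close>.  Conversely, if \<open>dist_m w w' < eps\<close> then
  averaging over the coordinates in \<open>I\<close> yields a tree automorphism \<open>\<phi>\<close> of \<open>Pow J\<close> such
  that \<open>w\<close> and \<open>w' \<circ> \<phi>\<close> are \<open>eps\<close>-close in normalised Hamming distance.  Hence a set of
  diameter less than \<open>eps\<close> contains at most (Hamming ball) \<open>\<times>\<close> (tree orbit) points of \<open>W\<close>.
  For small \<open>eps\<close> Chernoff's bound makes the first factor at most \<open>q powr (N/8)\<close>, and
  orbits of tree automorphisms have at most \<open>q ^ (3N/4)\<close> elements, so at least about
  \<open>q powr (N/8)\<close> pieces are needed: \<open>H_eps \<ge> N / 16\<close>.\<close>

section \<open>Cosets of the subgroups \<open>D_j\<close> and the group \<open>T_m\<close>\<close>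

definition same_coset :: "nat \<Rightarrow> nat set \<Rightarrow> nat set \<Rightarrow> bool" where
  "same_coset j x y \<longleftrightarrow> dadd x y \<subseteq> {..<j}"

lemma dadd_commute: "dadd x y = dadd y x"
  unfolding dadd_def by auto

lemma dadd_cancel_left: "dadd x (dadd x y) = y"
  unfolding dadd_def by auto

lemma dadd_eq_empty_iff: "dadd x y = {} \<longleftrightarrow> x = y"
  unfolding dadd_def by auto

lemma same_coset_refl: "same_coset j x x"
  unfolding same_coset_def dadd_def by auto

lemma same_coset_sym: "same_coset j x y \<Longrightarrow> same_coset j y x"
  unfolding same_coset_def by (simp add: dadd_commute)

lemma same_coset_trans: "same_coset j x y \<Longrightarrow> same_coset j y z \<Longrightarrow> same_coset j x z"
  unfolding same_coset_def dadd_def by blast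

lemma same_coset_0_iff: "same_coset 0 x y \<longleftrightarrow> x = y"
  unfolding same_coset_def using dadd_eq_empty_iff by auto

lemma same_coset_Dm: "x \<in> Dm m \<Longrightarrow> y \<in> Dm m \<Longrightarrow> m \<le> j \<Longrightarrow> same_coset j x y"
  unfolding same_coset_def dadd_def Dm_def by auto

lemma coset_eq_same_coset:
  assumes "a \<in> Dm m" "j \<le> m"
  shows "(\<lambda>b. dadd a b) ` Dm j = {y \<in> Dm m. same_coset j a y}"
proof (intro equalityI subsetI)
  fix y assume "y \<in> (\<lambda>b. dadd a b) ` Dm j"
  then show "y \<in> {y \<in> Dm m. same_coset j a y}"
    using assms unfolding Dm_def same_coset_def dadd_def by auto
next
  fix y assume "y \<in> {y \<in> Dm m. same_coset j a y}"
  then have "dadd a y \<in> Dm j" and "y = dadd a (dadd a y)"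
    unfolding same_coset_def Dm_def by (auto simp: dadd_cancel_left)
  then show "y \<in> (\<lambda>b. dadd a b) ` Dm j" by blast
qed

lemma Tm_same_coset_iff:
  assumes S: "S \<in> Tm m" and x: "x \<in> Dm m" and y: "y \<in> Dm m"
  shows "same_coset j (S x) (S y) \<longleftrightarrow> same_coset j x y"
proof -
  have bij: "bij_betw S (Dm m) (Dm m)"
    and cos: "\<And>C. 0 < j \<Longrightarrow> j < m \<Longrightarrow> C \<in> cosets m j \<Longrightarrow> S ` C \<in> cosets m j"
    using S unfolding Tm_def by auto
  have Sx: "S x \<in> Dm m" and Sy: "S y \<in> Dm m" and inj: "inj_on S (Dm m)"
    using bij x y by (auto simp: bij_betw_def)
  consider "j = 0" | "m \<le> j" | "0 < j" "j < m" by linarith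
  then show ?thesis
  proof cases
    case 1
    then show ?thesis using inj x y by (auto simp: same_coset_0_iff inj_on_def)
  next
    case 2
    then show ?thesis using Sx Sy x y by (simp add: same_coset_Dm)
  next
    case 3
    define C where "C = {z \<in> Dm m. same_coset j x z}"
    have "C = (\<lambda>b. dadd x b) ` Dm j"
      unfolding C_def using coset_eq_same_coset[OF x] 3 by simp
    then have "C \<in> cosets m j"
      unfolding cosets_def using x by blast
    then obtain a where a: "a \<in> Dm m" "S ` C = (\<lambda>b. dadd a b) ` Dm j"
      using cos[OF 3] unfolding cosets_def by force
    then have SC: "S ` C = {z \<in> Dm m. same_coset j a z}"
      using coset_eq_same_coset[OF a(1)] 3 by simp
    have "x \<in> C" using x unfolding C_def by (simp add: same_coset_refl)
    then have aSx: "same_coset j a (S x)" using SC by blast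
    have "y \<in> C \<longleftrightarrow> S y \<in> S ` C"
      using inj y unfolding C_def by (auto simp: inj_on_def)
    also have "\<dots> \<longleftrightarrow> same_coset j a (S y)"
      using SC Sy by blast
    also have "\<dots> \<longleftrightarrow> same_coset j (S x) (S y)"
      using aSx same_coset_sym same_coset_trans by blast
    finally show ?thesis
      using y unfolding C_def by simp
  qed
qed

lemma Tm_inv_same_coset_iff:
  assumes S: "S \<in> Tm m" and x: "x \<in> Dm m" and y: "y \<in> Dm m"
  shows "same_coset j (inv_into (Dm m) S x) (inv_into (Dm m) S y) \<longleftrightarrow> same_coset j x y"
proof -
  have bij: "bij_betw S (Dm m) (Dm m)" using S unfolding Tm_def by auto
  then have "inv_into (Dm m) S x \<in> Dm m" "inv_into (Dm m) S y \<in> Dm m"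
    "S (inv_into (Dm m) S x) = x" "S (inv_into (Dm m) S y) = y"
    using x y by (auto simp: bij_betw_def inv_into_into f_inv_into_f)
  then show ?thesis using Tm_same_coset_iff[OF S] by metis
qed

lemma id_in_Tm: "id \<in> Tm m"
  unfolding Tm_def by (auto simp: bij_betw_def)

section \<open>Periodic words\<close>

lemma dgen_gen_subset: "a \<in> dgen (gen ` I) \<Longrightarrow> a \<subseteq> I"
  by (induction rule: dgen.induct) (auto simp: gen_def dadd_def)

lemma finite_subset_in_dgen_gen: "finite A \<Longrightarrow> A \<subseteq> I \<Longrightarrow> A \<in> dgen (gen ` I)"
proof (induction A rule: finite_induct)
  case empty
  then show ?case by (simp add: dgen.zero)
next
  case (insert i A)
  then have "dadd (gen i) A \<in> dgen (gen ` I)" by (blast intro: dgen.step)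
  moreover have "dadd (gen i) A = insert i A"
    using insert unfolding gen_def dadd_def by auto
  ultimately show ?case by simp
qed

lemma words_undefined: "w \<in> words m \<Longrightarrow> x \<notin> Dm m \<Longrightarrow> w x = undefined"
  unfolding words_def by (auto simp: PiE_def extensional_def)

lemma finite_words: "finite (words m :: (nat set \<Rightarrow> 'q::finite) set)"
  unfolding words_def Dm_def by (simp add: finite_PiE)

lemma Wper_subset_words: "Wper m G \<subseteq> words m"
  unfolding Wper_def by auto

lemma Wper_nonempty: "Wper m G \<noteq> {}"
proof -
  have "(\<lambda>_. undefined) \<in> Wper m G"
    unfolding Wper_def words_def by (simp add: PiE_def extensional_def)
  then show ?thesis by blast
qed

lemma Wper_eq_Diff:
  assumes I: "I \<subseteq> {..<m}" and w: "w \<in> Wper m (dgen (gen ` I))" and x: "x \<in> Dm m"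
  shows "w x = w (x - I)"
proof -
  have "x \<inter> I \<in> dgen (gen ` I)"
    using I by (intro finite_subset_in_dgen_gen) (auto intro: finite_subset)
  moreover have "x - I \<in> Dm m"
    using x unfolding Dm_def by auto
  ultimately have "w (dadd (x \<inter> I) (x - I)) = w (x - I)"
    using w unfolding Wper_def by blast
  moreover have "dadd (x \<inter> I) (x - I) = x"
    unfolding dadd_def by auto
  ultimately show ?thesis by simp
qed

lemma Wper_eqI:
  assumes I: "I \<subseteq> {..<m}"
    and w1: "w1 \<in> Wper m (dgen (gen ` I))" and w2: "w2 \<in> Wper m (dgen (gen ` I))"
    and eq: "restrict w1 (Pow ({..<m} - I)) = restrict w2 (Pow ({..<m} - I))"
  shows "w1 = w2"
proof
  fix x
  show "w1 x = w2 x"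
  proof (cases "x \<in> Dm m")
    case True
    then have "x - I \<in> Pow ({..<m} - I)" unfolding Dm_def by auto
    then have "w1 (x - I) = w2 (x - I)" using fun_cong[OF eq, of "x - I"] by simp
    then show ?thesis using Wper_eq_Diff[OF I w1 True] Wper_eq_Diff[OF I w2 True] by simp
  next
    case False
    then show ?thesis
      using w1 w2 Wper_subset_words words_undefined by (metis subsetD)
  qed
qed

lemma Wper_extension:
  assumes I: "I \<subseteq> {..<m}" and v: "v \<in> Pow ({..<m} - I) \<rightarrow>\<^sub>E UNIV"
  defines "w \<equiv> restrict (\<lambda>x. v (x - I)) (Dm m)"
  shows "w \<in> Wper m (dgen (gen ` I))" and "restrict w (Pow ({..<m} - I)) = v"
proof -
  have "w (dadd g h) = w h" if "g \<in> dgen (gen ` I)" "h \<in> Dm m" for g h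
  proof -
    have "g \<subseteq> I" using dgen_gen_subset[OF that(1)] .
    then have "dadd g h \<in> Dm m" "dadd g h - I = h - I"
      using I that(2) unfolding Dm_def dadd_def by auto
    then show ?thesis unfolding w_def using that(2) by simp
  qed
  moreover have "w \<in> words m" unfolding words_def w_def by simp
  ultimately show "w \<in> Wper m (dgen (gen ` I))" unfolding Wper_def by blast
  show "restrict w (Pow ({..<m} - I)) = v"
  proof
    fix a
    show "restrict w (Pow ({..<m} - I)) a = v a"
    proof (cases "a \<in> Pow ({..<m} - I)")
      case True
      then have "a \<in> Dm m" "a - I = a" unfolding Dm_def by auto
      with True show ?thesis unfolding w_def by simp
    qed (simp add: PiE_arb[OF v])
  qed
qed

lemma bij_betw_restrict_Wper:
  assumes I: "I \<subseteq> {..<m}"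
  shows "bij_betw (\<lambda>w. restrict w (Pow ({..<m} - I))) (Wper m (dgen (gen ` I)))
           (Pow ({..<m} - I) \<rightarrow>\<^sub>E UNIV)"
  unfolding bij_betw_def
proof (intro conjI inj_onI equalityI subsetI)
  show "w1 = w2" if "w1 \<in> Wper m (dgen (gen ` I))" "w2 \<in> Wper m (dgen (gen ` I))"
    and "restrict w1 (Pow ({..<m} - I)) = restrict w2 (Pow ({..<m} - I))" for w1 w2
    using Wper_eqI[OF I] that by blast
  show "v \<in> (\<lambda>w. restrict w (Pow ({..<m} - I))) ` Wper m (dgen (gen ` I))"
    if "v \<in> Pow ({..<m} - I) \<rightarrow>\<^sub>E UNIV" for v
    using Wper_extension[OF I that] by (metis image_eqI)
  show "v \<in> Pow ({..<m} - I) \<rightarrow>\<^sub>E UNIV"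
    if "v \<in> (\<lambda>w. restrict w (Pow ({..<m} - I))) ` Wper m (dgen (gen ` I))" for v
    using that by (elim imageE) simp
qed

lemma card_Wper:
  assumes I: "I \<subseteq> {..<m}"
  shows "card (Wper m (dgen (gen ` I)) :: (nat set \<Rightarrow> 'q::finite) set)
       = CARD('q) ^ 2 ^ (m - card I)"
proof -
  have "card ({..<m} - I) = m - card I"
    using I by (simp add: card_Diff_subset finite_subset)
  with bij_betw_same_card[OF bij_betw_restrict_Wper[OF I]] show ?thesis
    by (simp add: card_funcsetE card_Pow)
qed

section \<open>Tree automorphisms of the free coordinates\<close>

text \<open>Automorphisms of the binary tree with leaves \<open>Pow J\<close>, whose levels are indexed by
  the elements of \<open>J\<close> in increasing order.\<close>

definition tree_iso :: "nat set \<Rightarrow> (nat set \<Rightarrow> nat set) \<Rightarrow> bool" where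
  "tree_iso J \<phi> \<longleftrightarrow> \<phi> ` Pow J \<subseteq> Pow J \<and>
     (\<forall>a\<in>Pow J. \<forall>b\<in>Pow J. \<forall>j. same_coset j (\<phi> a) (\<phi> b) \<longleftrightarrow> same_coset j a b)"

lemma tree_iso_inj_on: "tree_iso J \<phi> \<Longrightarrow> inj_on \<phi> (Pow J)"
  unfolding tree_iso_def inj_on_def using same_coset_0_iff by metis

lemma tree_iso_bij_betw: "finite J \<Longrightarrow> tree_iso J \<phi> \<Longrightarrow> bij_betw \<phi> (Pow J) (Pow J)"
  using tree_iso_inj_on endo_inj_surj[of "Pow J" \<phi>] unfolding tree_iso_def bij_betw_def by auto

lemma tree_iso_inv_into:
  assumes "finite J" "tree_iso J \<phi>"
  shows "tree_iso J (inv_into (Pow J) \<phi>)"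
proof -
  have bij: "bij_betw \<phi> (Pow J) (Pow J)" using tree_iso_bij_betw assms by auto
  have into: "\<And>a. a \<in> Pow J \<Longrightarrow> inv_into (Pow J) \<phi> a \<in> Pow J"
    using bij by (metis bij_betw_def inv_into_into)
  have inv: "\<And>a. a \<in> Pow J \<Longrightarrow> \<phi> (inv_into (Pow J) \<phi> a) = a"
    using bij by (simp add: bij_betw_def f_inv_into_f)
  show ?thesis
    unfolding tree_iso_def
  proof (intro conjI ballI allI image_subsetI)
    fix a b j
    assume "a \<in> Pow J" "b \<in> Pow J"
    then show "same_coset j (inv_into (Pow J) \<phi> a) (inv_into (Pow J) \<phi> b) \<longleftrightarrow> same_coset j a b"
      using assms(2) into inv unfolding tree_iso_def by metis
  qed (use into in blast)
qed

text \<open>The hypothesis says that \<open>D\<close> and \<open>E\<close> have the same maximum; removing \<open>I\<close> from \<open>D\<close>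
  does not change it, since it lies in \<open>E\<close>, which avoids \<open>I\<close>.\<close>

lemma subset_lessThan_Diff_iff:
  fixes D E I :: "nat set"
  assumes E: "finite E" "E \<inter> I = {}" and DE: "\<And>k. D \<subseteq> {..<k} \<longleftrightarrow> E \<subseteq> {..<k}"
  shows "D - I \<subseteq> {..<j} \<longleftrightarrow> E \<subseteq> {..<j}"
proof
  show "E \<subseteq> {..<j} \<Longrightarrow> D - I \<subseteq> {..<j}" using DE[of j] by blast
next
  assume DI: "D - I \<subseteq> {..<j}"
  show "E \<subseteq> {..<j}"
  proof (cases "E = {}")
    case False
    define L where "L = Max E"
    have "L \<in> E" unfolding L_def using E False by simp
    then have "\<not> D \<subseteq> {..<L}" using DE by auto
    moreover have "D \<subseteq> {..<Suc L}"
      using DE E unfolding L_def by (auto simp: less_Suc_eq_le)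
    ultimately have "L \<in> D" by (auto simp: less_Suc_eq)
    moreover have "L \<notin> I" using \<open>L \<in> E\<close> E by blast
    ultimately have "L < j" using DI by blast
    then show ?thesis
      using Max_ge[OF E(1)] unfolding L_def by (meson le_less_trans lessThan_iff subsetI)
  qed simp
qed

lemma tree_iso_Tm_slice:
  assumes S: "S \<in> Tm m" and I: "I \<subseteq> {..<m}" and t: "t \<subseteq> I"
  shows "tree_iso ({..<m} - I) (\<lambda>a. inv_into (Dm m) S (a \<union> t) - I)"
proof -
  let ?J = "{..<m} - I" and ?T = "inv_into (Dm m) S"
  have bij: "bij_betw S (Dm m) (Dm m)" using S unfolding Tm_def by auto
  have slice: "a \<union> t \<in> Dm m" if "a \<in> Pow ?J" for a
    using that t I unfolding Dm_def by auto
  then have "?T (a \<union> t) \<in> Dm m" if "a \<in> Pow ?J" for a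
    using bij that by (auto simp: bij_betw_def inv_into_into)
  then have into: "?T (a \<union> t) - I \<in> Pow ?J" if "a \<in> Pow ?J" for a
    using that unfolding Dm_def by auto
  have iso: "same_coset j (?T (a \<union> t) - I) (?T (b \<union> t) - I) \<longleftrightarrow> same_coset j a b"
    if a: "a \<in> Pow ?J" and b: "b \<in> Pow ?J" for a b j
  proof -
    have "dadd (a \<union> t) (b \<union> t) = dadd a b"
      using a b t unfolding dadd_def by auto
    then have "dadd (?T (a \<union> t)) (?T (b \<union> t)) \<subseteq> {..<k} \<longleftrightarrow> dadd a b \<subseteq> {..<k}" for k
      using Tm_inv_same_coset_iff[OF S slice[OF a] slice[OF b], of k]
      unfolding same_coset_def by simp
    moreover have "finite (dadd a b)" "dadd a b \<inter> I = {}"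
      using a b unfolding dadd_def by (auto intro: finite_subset)
    ultimately have "dadd (?T (a \<union> t)) (?T (b \<union> t)) - I \<subseteq> {..<j} \<longleftrightarrow> dadd a b \<subseteq> {..<j}"
      by (intro subset_lessThan_Diff_iff)
    moreover have "dadd (?T (a \<union> t) - I) (?T (b \<union> t) - I) = dadd (?T (a \<union> t)) (?T (b \<union> t)) - I"
      unfolding dadd_def by auto
    ultimately show ?thesis
      unfolding same_coset_def by simp
  qed
  show ?thesis
    unfolding tree_iso_def by (intro conjI image_subsetI ballI allI into iso)
qed

lemma sum_card_slices_le:
  assumes "finite I" "finite J" "I \<inter> J = {}" "E \<subseteq> Pow (I \<union> J)"
  shows "(\<Sum>t\<in>Pow I. card {a \<in> Pow J. a \<union> t \<in> E}) \<le> card E"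
proof -
  let ?\<Sigma> = "SIGMA t:Pow I. {a \<in> Pow J. a \<union> t \<in> E}"
  have "(\<Sum>t\<in>Pow I. card {a \<in> Pow J. a \<union> t \<in> E}) = card ?\<Sigma>"
    by (rule card_SigmaI[symmetric]) (use assms(1,2) in auto)
  also have "\<dots> = card ((\<lambda>(t, a). a \<union> t) ` ?\<Sigma>)"
  proof (rule card_image[symmetric])
    show "inj_on (\<lambda>(t, a). a \<union> t) ?\<Sigma>"
      by (rule inj_on_inverseI[where g = "\<lambda>u. (u \<inter> I, u \<inter> J)"]) (use assms(3) in auto)
  qed
  also have "\<dots> \<le> card E"
  proof (rule card_mono)
    show "finite E" using assms by (meson finite_Pow_iff finite_UnI finite_subset)
  qed auto
  finally show ?thesis .
qed

lemma exists_slice_card_less: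
  assumes "finite I" "finite J" "I \<inter> J = {}" "E \<subseteq> Pow (I \<union> J)"
    and E: "real (card E) < eps * 2 ^ (card I + card J)"
  shows "\<exists>t\<subseteq>I. real (card {a \<in> Pow J. a \<union> t \<in> E}) < eps * 2 ^ card J"
proof (rule ccontr)
  assume "\<not> ?thesis"
  then have "eps * 2 ^ card J \<le> real (card {a \<in> Pow J. a \<union> t \<in> E})" if "t \<in> Pow I" for t
    using that by (simp add: not_less)
  then have "(\<Sum>t\<in>Pow I. eps * 2 ^ card J) \<le> (\<Sum>t\<in>Pow I. real (card {a \<in> Pow J. a \<union> t \<in> E}))"
    by (rule sum_mono)
  also have "\<dots> \<le> real (card E)"
    using sum_card_slices_le[OF assms(1-4)] by (simp flip: of_nat_sum)
  also have "\<dots> < eps * 2 ^ (card I + card J)" by (rule E)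
  also have "\<dots> = (\<Sum>t\<in>Pow I. eps * 2 ^ card J)"
    using assms(1) by (simp add: card_Pow power_add)
  finally show False by simp
qed

lemma dH_act_less_imp_tree_iso:
  assumes I: "I \<subseteq> {..<m}"
    and w: "w \<in> Wper m (dgen (gen ` I))" and w': "w' \<in> Wper m (dgen (gen ` I))"
    and S: "S \<in> Tm m" and d: "dH m w (act m S w') < eps"
  shows "\<exists>\<phi>. tree_iso ({..<m} - I) \<phi> \<and>
    real (card {a \<in> Pow ({..<m} - I). w a \<noteq> w' (\<phi> a)}) < eps * 2 ^ card ({..<m} - I)"
proof -
  let ?J = "{..<m} - I" and ?T = "inv_into (Dm m) S"
  define E where "E = {x \<in> Dm m. w x \<noteq> w' (?T x)}"
  have "{g \<in> Dm m. w g \<noteq> act m S w' g} = E" unfolding E_def act_def by auto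
  then have "real (card E) < eps * 2 ^ m" using d unfolding dH_def by (simp add: divide_less_eq)
  moreover have "card I \<le> m" using card_mono[OF _ I] by simp
  then have "m = card I + card ?J"
    using I by (simp add: card_Diff_subset finite_subset)
  moreover have "E \<subseteq> Pow (I \<union> ?J)" using I unfolding E_def Dm_def by auto
  moreover have "finite I" using I finite_subset by blast
  ultimately obtain t where t: "t \<subseteq> I"
    and small: "real (card {a \<in> Pow ?J. a \<union> t \<in> E}) < eps * 2 ^ card ?J"
    using exists_slice_card_less[of I ?J E eps] by auto
  define \<phi> where "\<phi> a = ?T (a \<union> t) - I" for a
  have "tree_iso ?J \<phi>" unfolding \<phi>_def by (rule tree_iso_Tm_slice[OF S I t])
  moreover have "w (a \<union> t) \<noteq> w' (?T (a \<union> t)) \<longleftrightarrow> w a \<noteq> w' (\<phi> a)" if a: "a \<in> Pow ?J" for a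
  proof -
    have at: "a \<union> t \<in> Dm m" "a \<union> t - I = a" using a t I unfolding Dm_def by auto
    then have "?T (a \<union> t) \<in> Dm m"
      using S unfolding Tm_def by (auto simp: bij_betw_def inv_into_into)
    then show ?thesis
      using Wper_eq_Diff[OF I w at(1)] Wper_eq_Diff[OF I w'] at(2) unfolding \<phi>_def by simp
  qed
  then have "{a \<in> Pow ?J. a \<union> t \<in> E} = {a \<in> Pow ?J. w a \<noteq> w' (\<phi> a)}"
    using t I unfolding E_def Dm_def by auto
  ultimately show ?thesis using small by auto
qed

section \<open>Orbits of tree automorphisms\<close>

definition tree_orbit :: "nat set \<Rightarrow> (nat set \<Rightarrow> 'q) \<Rightarrow> (nat set \<Rightarrow> 'q) set" where
  "tree_orbit J u = {restrict (\<lambda>a. u (\<phi> a)) (Pow J) | \<phi>. tree_iso J \<phi>}"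

text \<open>The word on one of the two subtrees below the root; the root level is \<open>Max J\<close>.\<close>

definition branch :: "nat set \<Rightarrow> bool \<Rightarrow> (nat set \<Rightarrow> 'q) \<Rightarrow> (nat set \<Rightarrow> 'q)" where
  "branch J b u = restrict (\<lambda>a. u (if b then insert (Max J) a else a)) (Pow (J - {Max J}))"

lemma tree_orbit_subset_PiE: "tree_orbit J u \<subseteq> Pow J \<rightarrow>\<^sub>E UNIV"
  unfolding tree_orbit_def by (force intro: restrict_PiE)

lemma finite_tree_orbit: "finite J \<Longrightarrow> finite (tree_orbit J (u :: nat set \<Rightarrow> 'q::finite))"
  using tree_orbit_subset_PiE finite_subset by (metis finite_Pow_iff finite_PiE finite)

lemma card_tree_orbit_empty: "card (tree_orbit {} u) \<le> 1"
proof -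
  have "tree_orbit {} u \<subseteq> {restrict (\<lambda>a. u {}) (Pow {})}"
    unfolding tree_orbit_def tree_iso_def by auto
  then show ?thesis using card_mono[of "{restrict (\<lambda>a. u {}) (Pow {})}"] by simp
qed

lemma inj_on_branches:
  assumes "finite J" "J \<noteq> {}"
  shows "inj_on (\<lambda>v. (branch J False v, branch J True v)) (Pow J \<rightarrow>\<^sub>E UNIV)"
proof (rule inj_onI, rule ext)
  fix v1 v2 :: "nat set \<Rightarrow> 'q" and a
  assume v1: "v1 \<in> Pow J \<rightarrow>\<^sub>E UNIV" and v2: "v2 \<in> Pow J \<rightarrow>\<^sub>E UNIV"
    and eq: "(branch J False v1, branch J True v1) = (branch J False v2, branch J True v2)"
  let ?j = "Max J"
  show "v1 a = v2 a"
  proof (cases "a \<in> Pow J")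
    case False
    then show ?thesis using PiE_arb[OF v1 False] PiE_arb[OF v2 False] by simp
  next
    case True
    then have "a - {?j} \<in> Pow (J - {?j})" by auto
    moreover have "a = (if ?j \<in> a then insert ?j (a - {?j}) else a - {?j})" by auto
    ultimately show ?thesis
      using fun_cong[OF eq[unfolded prod.inject, THEN conjunct1], of "a - {?j}"]
        fun_cong[OF eq[unfolded prod.inject, THEN conjunct2], of "a - {?j}"]
      unfolding branch_def by (cases "?j \<in> a") simp_all
  qed
qed

lemma same_coset_Max_iff:
  assumes "finite J" "x \<in> Pow J" "y \<in> Pow J"
  shows "same_coset (Max J) x y \<longleftrightarrow> (Max J \<in> x \<longleftrightarrow> Max J \<in> y)"
proof -
  have "z \<le> Max J" if "z \<in> dadd x y" for z
    using assms that unfolding dadd_def by auto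
  then have "dadd x y \<subseteq> {..<Max J} \<longleftrightarrow> Max J \<notin> dadd x y"
    by (auto simp: order.order_iff_strict)
  then show ?thesis unfolding same_coset_def dadd_def by auto
qed

text \<open>A tree automorphism either fixes or swaps the two subtrees below the root.\<close>

lemma tree_iso_Max_mem_iff:
  assumes "finite J" "tree_iso J \<phi>" "a \<in> Pow J"
  shows "Max J \<in> \<phi> a \<longleftrightarrow> (Max J \<in> \<phi> {} \<longleftrightarrow> Max J \<notin> a)"
proof -
  have "\<phi> a \<in> Pow J" "\<phi> {} \<in> Pow J"
    "same_coset (Max J) (\<phi> a) (\<phi> {}) \<longleftrightarrow> same_coset (Max J) a {}"
    using assms unfolding tree_iso_def by auto
  then show ?thesis
    using same_coset_Max_iff[OF assms(1)] assms(3) by auto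
qed

lemma tree_iso_branch:
  assumes "finite J" "J \<noteq> {}" "tree_iso J \<phi>"
  shows "tree_iso (J - {Max J}) (\<lambda>a. \<phi> (if b then insert (Max J) a else a) - {Max J})"
proof -
  let ?j = "Max J" and ?J' = "J - {Max J}"
  define g where "g a = (if b then insert ?j a else a)" for a
  have gJ: "g a \<in> Pow J" if "a \<in> Pow ?J'" for a
    using that assms(1,2) unfolding g_def by auto
  have "\<phi> (g a) \<in> Pow J" if "a \<in> Pow ?J'" for a
    using gJ[OF that] assms(3) unfolding tree_iso_def by auto
  then have into: "\<phi> (g a) - {?j} \<in> Pow ?J'" if "a \<in> Pow ?J'" for a
    using that by auto
  have iso: "same_coset k (\<phi> (g a) - {?j}) (\<phi> (g a') - {?j}) \<longleftrightarrow> same_coset k a a'"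
    if a: "a \<in> Pow ?J'" and a': "a' \<in> Pow ?J'" for a a' k
  proof -
    have "?j \<in> \<phi> (g a) \<longleftrightarrow> ?j \<in> \<phi> (g a')"
      using tree_iso_Max_mem_iff[OF assms(1,3) gJ[OF a]] tree_iso_Max_mem_iff[OF assms(1,3) gJ[OF a']] a a'
      unfolding g_def by auto
    then have "dadd (\<phi> (g a) - {?j}) (\<phi> (g a') - {?j}) = dadd (\<phi> (g a)) (\<phi> (g a'))"
      unfolding dadd_def by auto
    moreover have "dadd (g a) (g a') = dadd a a'"
      using a a' unfolding g_def dadd_def by auto
    ultimately show ?thesis
      using assms(3) gJ[OF a] gJ[OF a'] unfolding tree_iso_def same_coset_def by auto
  qed
  show ?thesis
    unfolding tree_iso_def g_def[symmetric] by (intro conjI image_subsetI ballI allI into iso)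
qed

lemma tree_orbit_branches:
  assumes fin: "finite J" and ne: "J \<noteq> {}" and v: "v \<in> tree_orbit J u"
  shows "\<exists>s. branch J False v \<in> tree_orbit (J - {Max J}) (branch J s u) \<and>
             branch J True v \<in> tree_orbit (J - {Max J}) (branch J (\<not> s) u)"
proof -
  let ?j = "Max J" and ?J' = "J - {Max J}"
  obtain \<phi> where v_def: "v = restrict (\<lambda>a. u (\<phi> a)) (Pow J)" and \<phi>: "tree_iso J \<phi>"
    using v unfolding tree_orbit_def by auto
  define s where "s = (?j \<in> \<phi> {})"
  define g where "g b a = (if b then insert ?j a else a)" for b a
  define \<psi> where "\<psi> b a = \<phi> (g b a) - {?j}" for b a
  have gJ: "g b a \<in> Pow J" if "a \<in> Pow ?J'" for a b
    using that fin ne unfolding g_def by auto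
  have "v (g b a) = branch J (s \<noteq> b) u (\<psi> b a)" if a: "a \<in> Pow ?J'" for a b
  proof -
    have "\<phi> (g b a) \<in> Pow J" using \<phi> gJ[OF a, of b] unfolding tree_iso_def by blast
    moreover have "?j \<in> \<phi> (g b a) \<longleftrightarrow> s \<noteq> b"
      using tree_iso_Max_mem_iff[OF fin \<phi> gJ[OF a, of b]] a unfolding s_def g_def by auto
    ultimately have "\<phi> (g b a) = (if s \<noteq> b then insert ?j (\<psi> b a) else \<psi> b a)"
      and "\<psi> b a \<in> Pow ?J'"
      unfolding \<psi>_def by auto
    then show ?thesis
      using gJ[OF a, of b] unfolding branch_def v_def by simp
  qed
  then have "branch J b v = restrict (\<lambda>a. branch J (s \<noteq> b) u (\<psi> b a)) (Pow ?J')" for b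
    unfolding branch_def[of J b v] by (intro restrict_ext) (simp add: g_def)
  moreover have "tree_iso ?J' (\<psi> b)" for b
    unfolding \<psi>_def g_def by (rule tree_iso_branch[OF fin ne \<phi>])
  ultimately have "branch J b v \<in> tree_orbit ?J' (branch J (s \<noteq> b) u)" for b
    unfolding tree_orbit_def by blast
  from this[of False] this[of True] show ?thesis by auto
qed

lemma card_tree_orbit_le_card_pairs:
  assumes fin: "finite J" and ne: "J \<noteq> {}"
    and X: "\<And>b. tree_orbit (J - {Max J}) (branch J b u) \<subseteq> X b" "\<And>b. finite (X b)"
  shows "card (tree_orbit J (u :: nat set \<Rightarrow> 'q)) \<le> card (X False \<times> X True \<union> X True \<times> X False)"
proof -
  let ?f = "\<lambda>v. (branch J False v, branch J True v)"
  have "inj_on ?f (tree_orbit J u)"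
    using inj_on_branches[OF fin ne] tree_orbit_subset_PiE by (rule inj_on_subset)
  then have "card (tree_orbit J u) = card (?f ` tree_orbit J u)"
    by (simp add: card_image)
  also have "\<dots> \<le> card (X False \<times> X True \<union> X True \<times> X False)"
  proof (rule card_mono)
    show "finite (X False \<times> X True \<union> X True \<times> X False)"
      using X(2) by simp
    show "?f ` tree_orbit J u \<subseteq> X False \<times> X True \<union> X True \<times> X False"
    proof (rule image_subsetI)
      fix v assume "v \<in> tree_orbit J u"
      then obtain s where "branch J False v \<in> tree_orbit (J - {Max J}) (branch J s u)"
        "branch J True v \<in> tree_orbit (J - {Max J}) (branch J (\<not> s) u)"
        using tree_orbit_branches[OF fin ne] by blast
      then have "branch J False v \<in> X s" "branch J True v \<in> X (\<not> s)"
        using X(1) by blast+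
      then show "?f v \<in> X False \<times> X True \<union> X True \<times> X False"
        by (cases s) auto
    qed
  qed
  finally show ?thesis .
qed

lemma card_tree_orbit_le_branches:
  assumes "finite J" "J \<noteq> {}"
  shows "card (tree_orbit J (u :: nat set \<Rightarrow> 'q::finite))
    \<le> 2 * card (tree_orbit (J - {Max J}) (branch J False u))
        * card (tree_orbit (J - {Max J}) (branch J True u))"
proof -
  let ?X = "\<lambda>b. tree_orbit (J - {Max J}) (branch J b u)"
  have "card (tree_orbit J u) \<le> card (?X False \<times> ?X True \<union> ?X True \<times> ?X False)"
    using assms by (intro card_tree_orbit_le_card_pairs subset_refl finite_tree_orbit finite_Diff)
  also have "\<dots> \<le> card (?X False \<times> ?X True) + card (?X True \<times> ?X False)"
    by (rule card_Un_le)
  also have "\<dots> = 2 * card (?X False) * card (?X True)"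
    by (simp add: card_cartesian_product algebra_simps)
  finally show ?thesis .
qed

lemma card_tree_orbit_le:
  "finite J \<Longrightarrow> 2 * card (tree_orbit J (u :: nat set \<Rightarrow> 'q::finite)) \<le> 2 ^ 2 ^ card J"
proof (induction "card J" arbitrary: J u)
  case 0
  then show ?case using card_tree_orbit_empty[of u] by simp
next
  case (Suc n)
  then have ne: "J \<noteq> {}" by auto
  then have n: "card (J - {Max J}) = n" using Suc(2,3) by simp
  have "2 * card (tree_orbit J u) \<le> (2 * card (tree_orbit (J - {Max J}) (branch J False u)))
      * (2 * card (tree_orbit (J - {Max J}) (branch J True u)))"
    using card_tree_orbit_le_branches[OF Suc(3) ne, of u] by simp
  also have "\<dots> \<le> 2 ^ 2 ^ n * 2 ^ 2 ^ n"
    using Suc(1)[OF n[symmetric]] Suc(3) by (intro mult_le_mono) (simp_all add: n)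
  also have "\<dots> = 2 ^ 2 ^ card J" by (simp flip: power_add add: Suc(2)[symmetric])
  finally show ?case .
qed

lemma tree_orbit_singleton_subset:
  "tree_orbit {i} x \<subseteq> (if x {} = x {i} then {restrict (\<lambda>_. x {}) (Pow {i})}
     else {f \<in> Pow {i} \<rightarrow>\<^sub>E UNIV. f {} \<noteq> f {i}})"
proof
  fix v assume "v \<in> tree_orbit {i} x"
  then obtain \<phi> where v: "v = restrict (\<lambda>a. x (\<phi> a)) (Pow {i})" and \<phi>: "tree_iso {i} \<phi>"
    unfolding tree_orbit_def by auto
  have "\<phi> a \<in> {{}, {i}}" if "a \<in> Pow {i}" for a
    using \<phi> that unfolding tree_iso_def by auto
  moreover have "\<phi> {} \<noteq> \<phi> {i}"
    using tree_iso_inj_on[OF \<phi>] unfolding inj_on_def by blast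
  ultimately have "\<phi> {} = {} \<and> \<phi> {i} = {i} \<or> \<phi> {} = {i} \<and> \<phi> {i} = {}"
    by auto
  moreover have "Pow {i} = {{}, {i}}" by auto
  ultimately show "v \<in> (if x {} = x {i} then {restrict (\<lambda>_. x {}) (Pow {i})}
     else {f \<in> Pow {i} \<rightarrow>\<^sub>E UNIV. f {} \<noteq> f {i}})"
    unfolding v by (auto intro!: restrict_ext)
qed

lemma card_nonconstant_le_2:
  assumes "CARD('q::finite) = 2"
  shows "card {f \<in> Pow {i} \<rightarrow>\<^sub>E (UNIV :: 'q set). f {} \<noteq> f {i}} \<le> 2"
proof -
  let ?N = "{f \<in> Pow {i} \<rightarrow>\<^sub>E (UNIV :: 'q set). f {} \<noteq> f {i}}"
  obtain p p' :: 'q where UNIV: "UNIV = {p, p'}"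
    using assms card_2_iff by metis
  have "inj_on (\<lambda>f. f {}) ?N"
  proof (rule inj_onI)
    fix f g assume f: "f \<in> ?N" and g: "g \<in> ?N" and eq: "f {} = g {}"
    have "f {i} \<in> {p, p'}" "g {i} \<in> {p, p'}" "f {} \<in> {p, p'}"
      using UNIV by auto
    then have "f {i} = g {i}" using f g eq by auto
    then have "f a = g a" if "a \<in> Pow {i}" for a
      using that eq by (auto simp: subset_singleton_iff)
    then show "f = g"
      by (rule PiE_ext[of f "Pow {i}" "\<lambda>_. UNIV" g, rotated 2]) (use f g in auto)
  qed
  then have "card ?N \<le> card (UNIV :: 'q set)"
    by (rule card_inj_on_le) auto
  then show ?thesis using assms by simp
qed

text \<open>For \<open>q = 2\<close> the crude bound \<open>card_tree_orbit_le\<close> is too weak: it must be sharpened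
  on trees of height two to get an orbit bound \<open>q ^ (3N/4)\<close> with exponent below \<open>N\<close>.\<close>

lemma card_tree_orbit_two_levels:
  assumes q: "CARD('q::finite) = 2" and J: "finite J" "card J = 2"
  shows "card (tree_orbit J (u :: nat set \<Rightarrow> 'q)) \<le> 4"
proof -
  have ne: "J \<noteq> {}" using J by auto
  then have "card (J - {Max J}) = 1" using J by simp
  then obtain i where i: "J - {Max J} = {i}" using card_1_singletonE by blast
  let ?N = "{f \<in> Pow {i} \<rightarrow>\<^sub>E (UNIV :: 'q set). f {} \<noteq> f {i}}"
  define X where "X b = (if branch J b u {} = branch J b u {i}
    then {restrict (\<lambda>_. branch J b u {}) (Pow {i})} else ?N)" for b
  have sub: "tree_orbit (J - {Max J}) (branch J b u) \<subseteq> X b" for b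
    unfolding i X_def by (rule tree_orbit_singleton_subset)
  have "finite ?N"
    by (rule finite_subset[of _ "Pow {i} \<rightarrow>\<^sub>E UNIV"]) (auto intro: finite_PiE)
  then have fin: "finite (X b)" for b
    unfolding X_def by simp
  have card: "card (X b) \<le> 2" for b
    using card_nonconstant_le_2[OF q] unfolding X_def by auto
  have "card (tree_orbit J u) \<le> card (X False \<times> X True \<union> X True \<times> X False)"
    by (rule card_tree_orbit_le_card_pairs[OF J(1) ne sub fin])
  also have "\<dots> \<le> 4"
  proof (cases "X False = X True")
    case True
    then show ?thesis
      using mult_le_mono[OF card[of True] card[of True]] by (simp add: card_cartesian_product)
  next
    case False
    then have "card (X False) = 1 \<or> card (X True) = 1"
      unfolding X_def by (auto split: if_splits)
    then have "card (X False) * card (X True) \<le> 2"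
      using card[of False] card[of True] by auto
    moreover have "card (X False \<times> X True \<union> X True \<times> X False)
        \<le> card (X False \<times> X True) + card (X True \<times> X False)"
      by (rule card_Un_le)
    ultimately show ?thesis by (simp add: card_cartesian_product mult.commute)
  qed
  finally show ?thesis .
qed

lemma card_tree_orbit_le_power:
  assumes q: "CARD('q::finite) \<ge> 2" and J: "finite J" "2 \<le> card J"
  shows "2 * card (tree_orbit J (u :: nat set \<Rightarrow> 'q)) \<le> CARD('q) ^ (3 * 2 ^ (card J - 2))"
  using J
proof (induction "card J - 2" arbitrary: J u)
  case 0
  then have J2: "card J = 2" by simp
  show ?case
  proof (cases "CARD('q) = 2")
    case True
    then show ?thesis using card_tree_orbit_two_levels[OF True 0(2) J2, of u] J2 by simp
  next
    case False
    then have "3 ^ 3 \<le> CARD('q) ^ 3" using q by (intro power_mono) auto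
    moreover have "2 * card (tree_orbit J u) \<le> 2 ^ 2 ^ 2"
      using card_tree_orbit_le[OF 0(2), of u] J2 by simp
    ultimately show ?thesis using J2 by simp
  qed
next
  case (Suc k)
  then have ne: "J \<noteq> {}" by auto
  then have k: "k = card (J - {Max J}) - 2" "2 \<le> card (J - {Max J})"
    using Suc(2,3) by simp_all
  let ?B = "\<lambda>b. 2 * card (tree_orbit (J - {Max J}) (branch J b u))"
  have "2 * card (tree_orbit J u) \<le> ?B False * ?B True"
    using card_tree_orbit_le_branches[OF Suc(3) ne, of u] by simp
  also have "\<dots> \<le> CARD('q) ^ (3 * 2 ^ k) * CARD('q) ^ (3 * 2 ^ k)"
    using Suc(1)[OF k(1)] Suc(3) k by (intro mult_le_mono) simp_all
  also have "\<dots> = CARD('q) ^ (3 * 2 ^ (card J - 2))"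
    by (simp flip: power_add add: Suc(2)[symmetric])
  finally show ?case .
qed

section \<open>Balls for \<open>dist_m\<close>\<close>

lemma card_hamming_ball_le_sum:
  fixes w :: "'a \<Rightarrow> 'q::finite"
  assumes X: "finite X"
  shows "card {u \<in> X \<rightarrow>\<^sub>E UNIV. real (card {a \<in> X. u a \<noteq> w a}) < r}
    \<le> (\<Sum>D\<in>{D \<in> Pow X. real (card D) \<le> r}. CARD('q) ^ card D)"
proof -
  let ?B = "{u \<in> X \<rightarrow>\<^sub>E (UNIV :: 'q set). real (card {a \<in> X. u a \<noteq> w a}) < r}"
  let ?DD = "{D \<in> Pow X. real (card D) \<le> r}"
  let ?\<Sigma> = "SIGMA D:?DD. D \<rightarrow>\<^sub>E (UNIV :: 'q set)"
  define F where "F = (\<lambda>(D, g). restrict (\<lambda>a. if a \<in> D then g a else w a) X)"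
  have fin: "finite ?\<Sigma>"
    using X by (intro finite_SigmaI finite_PiE) (auto intro: finite_subset)
  have "?B \<subseteq> F ` ?\<Sigma>"
  proof
    fix u assume u: "u \<in> ?B"
    define D where "D = {a \<in> X. u a \<noteq> w a}"
    have "F (D, restrict u D) = u"
    proof (rule ext)
      fix a
      show "F (D, restrict u D) a = u a"
        using PiE_arb[of u X "\<lambda>_. UNIV" a] u unfolding F_def D_def by auto
    qed
    moreover have "(D, restrict u D) \<in> ?\<Sigma>"
      using u unfolding D_def by auto
    ultimately show "u \<in> F ` ?\<Sigma>" by (rule image_eqI[OF sym])
  qed
  then have "card ?B \<le> card (F ` ?\<Sigma>)"
    using fin by (intro card_mono finite_imageI)
  also have "\<dots> \<le> card ?\<Sigma>"
    using fin by (rule card_image_le)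
  also have "\<dots> = (\<Sum>D\<in>?DD. card (D \<rightarrow>\<^sub>E (UNIV :: 'q set)))"
    using X by (intro card_SigmaI ballI finite_PiE) (auto intro: finite_subset)
  also have "\<dots> = (\<Sum>D\<in>?DD. CARD('q) ^ card D)"
    using X by (intro sum.cong refl card_funcsetE) (auto intro: finite_subset)
  finally show ?thesis .
qed

lemma sum_Pow_power_card: "finite X \<Longrightarrow> (\<Sum>D\<in>Pow X. (x::real) ^ card D) = (1 + x) ^ card X"
  using prod_add[of X "\<lambda>_. x" "\<lambda>_. 1"] by (simp add: add.commute)

lemma card_hamming_ball_le:
  fixes w :: "'a \<Rightarrow> 'q::finite" and eps l :: real
  assumes X: "finite X" and l: "0 < l" "l \<le> 1"
  shows "real (card {u \<in> X \<rightarrow>\<^sub>E UNIV. real (card {a \<in> X. u a \<noteq> w a}) < eps * card X})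
     \<le> l powr (- (eps * card X)) * (1 + CARD('q) * l) ^ card X"
proof -
  let ?q = "real CARD('q)" and ?L = "l powr (- (eps * card X))"
  let ?DD = "{D \<in> Pow X. real (card D) \<le> eps * card X}"
  have "real (card {u \<in> X \<rightarrow>\<^sub>E UNIV. real (card {a \<in> X. u a \<noteq> w a}) < eps * card X})
      \<le> (\<Sum>D\<in>?DD. ?q ^ card D)"
    using of_nat_mono[OF card_hamming_ball_le_sum[OF X, of w "eps * card X"]] by simp
  also have "\<dots> \<le> (\<Sum>D\<in>?DD. ?q ^ card D * (l ^ card D * ?L))"
  proof (rule sum_mono)
    fix D assume D: "D \<in> ?DD"
    \<comment> \<open>Chernoff's trick: this factor is at least one when \<open>card D \<le> eps * card X\<close>.\<close>
    have "1 = l powr 0" using l by simp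
    also have "\<dots> \<le> l powr (real (card D) - eps * card X)"
      using D l by (intro powr_mono') auto
    also have "\<dots> = l ^ card D * ?L"
      using l by (simp add: powr_diff powr_realpow powr_minus_divide)
    finally show "?q ^ card D \<le> ?q ^ card D * (l ^ card D * ?L)"
      by (simp add: mult_le_cancel_left1)
  qed
  also have "\<dots> \<le> (\<Sum>D\<in>Pow X. ?q ^ card D * (l ^ card D * ?L))"
    using X l by (intro sum_mono2) auto
  also have "\<dots> = ?L * (\<Sum>D\<in>Pow X. (?q * l) ^ card D)"
    by (simp add: sum_distrib_left power_mult_distrib algebra_simps)
  also have "\<dots> = ?L * (1 + ?q * l) ^ card X"
    using sum_Pow_power_card[OF X] by simp
  finally show ?thesis .
qed

lemma card_Dm: "card (Dm m) = 2 ^ m"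
  unfolding Dm_def by (simp add: card_Pow)

lemma finite_dH_act_image: "finite ((\<lambda>S. dH m w1 (act m S w2)) ` Tm m)"
proof (rule finite_subset)
  show "(\<lambda>S. dH m w1 (act m S w2)) ` Tm m \<subseteq> (\<lambda>k. real k / 2 ^ m) ` {..2 ^ m}"
  proof (rule image_subsetI)
    fix S
    have "card {g \<in> Dm m. w1 g \<noteq> act m S w2 g} \<le> card (Dm m)"
      by (rule card_mono) (auto simp: Dm_def)
    then show "dH m w1 (act m S w2) \<in> (\<lambda>k. real k / 2 ^ m) ` {..2 ^ m}"
      unfolding dH_def card_Dm by auto
  qed
qed simp

lemma dist_m_lessD:
  assumes "dist_m m w1 w2 < eps"
  shows "\<exists>S\<in>Tm m. dH m w1 (act m S w2) < eps"
  using assms id_in_Tm unfolding dist_m_def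
  by (subst (asm) Min_less_iff[OF finite_dH_act_image]) auto

lemma act_id: "w \<in> words m \<Longrightarrow> act m id w = w"
  using words_undefined unfolding act_def by (fastforce simp: inv_into_f_f)

lemma dist_m_self: "w \<in> words m \<Longrightarrow> dist_m m w w = 0"
proof -
  assume w: "w \<in> words m"
  have "dH m w (act m id w) = 0" using act_id[OF w] unfolding dH_def by simp
  moreover have "0 \<le> dH m w (act m S w)" for S unfolding dH_def by simp
  ultimately show ?thesis
    unfolding dist_m_def using id_in_Tm finite_dH_act_image
    by (intro antisym Min_le Min.boundedI) force+
qed

lemma dist_m_less_imp_tree_orbit:
  fixes w w' :: "nat set \<Rightarrow> 'q"
  assumes I: "I \<subseteq> {..<m}"
    and w: "w \<in> Wper m (dgen (gen ` I))" and w': "w' \<in> Wper m (dgen (gen ` I))"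
    and d: "dist_m m w w' < eps"
  shows "\<exists>u \<in> Pow ({..<m} - I) \<rightarrow>\<^sub>E UNIV.
    real (card {a \<in> Pow ({..<m} - I). u a \<noteq> w a}) < eps * card (Pow ({..<m} - I)) \<and>
    restrict w' (Pow ({..<m} - I)) \<in> tree_orbit ({..<m} - I) u"
proof -
  let ?J = "{..<m} - I"
  have J: "finite ?J" by simp
  obtain S where "S \<in> Tm m" "dH m w (act m S w') < eps"
    using d dist_m_lessD by blast
  then obtain \<phi> where \<phi>: "tree_iso ?J \<phi>"
    and close: "real (card {a \<in> Pow ?J. w a \<noteq> w' (\<phi> a)}) < eps * 2 ^ card ?J"
    using dH_act_less_imp_tree_iso[OF I w w'] by blast
  define u where "u = restrict (\<lambda>a. w' (\<phi> a)) (Pow ?J)"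
  have "{a \<in> Pow ?J. u a \<noteq> w a} = {a \<in> Pow ?J. w a \<noteq> w' (\<phi> a)}"
    unfolding u_def by auto
  then have small: "real (card {a \<in> Pow ?J. u a \<noteq> w a}) < eps * card (Pow ?J)"
    using close by (simp add: card_Pow)
  have bij: "bij_betw \<phi> (Pow ?J) (Pow ?J)" by (rule tree_iso_bij_betw[OF J \<phi>])
  have "inv_into (Pow ?J) \<phi> a \<in> Pow ?J" if "a \<in> Pow ?J" for a
    using bij that by (metis bij_betw_def inv_into_into)
  moreover have "\<phi> (inv_into (Pow ?J) \<phi> a) = a" if "a \<in> Pow ?J" for a
    using bij that by (simp add: bij_betw_def f_inv_into_f)
  ultimately have "restrict w' (Pow ?J) = restrict (\<lambda>a. u (inv_into (Pow ?J) \<phi> a)) (Pow ?J)"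
    unfolding u_def by (intro restrict_ext) simp
  then have "restrict w' (Pow ?J) \<in> tree_orbit ?J u"
    unfolding tree_orbit_def using tree_iso_inv_into[OF J \<phi>] by blast
  moreover have "u \<in> Pow ?J \<rightarrow>\<^sub>E UNIV" unfolding u_def by simp
  ultimately show ?thesis using small by blast
qed

lemma card_dist_m_ball_Wper_le:
  fixes w :: "nat set \<Rightarrow> 'q::finite"
  assumes I: "I \<subseteq> {..<m}" and w: "w \<in> Wper m (dgen (gen ` I))"
    and orbit: "\<And>u :: nat set \<Rightarrow> 'q. card (tree_orbit ({..<m} - I) u) \<le> K"
  shows "card {w' \<in> Wper m (dgen (gen ` I)). dist_m m w w' < eps}
     \<le> card {u \<in> Pow ({..<m} - I) \<rightarrow>\<^sub>E UNIV.
          real (card {a \<in> Pow ({..<m} - I). u a \<noteq> w a}) < eps * card (Pow ({..<m} - I))} * K"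
proof -
  let ?J = "{..<m} - I" and ?W = "Wper m (dgen (gen ` I)) :: (nat set \<Rightarrow> 'q) set"
  let ?ball = "{w' \<in> ?W. dist_m m w w' < eps}"
  let ?B = "{u \<in> Pow ?J \<rightarrow>\<^sub>E UNIV. real (card {a \<in> Pow ?J. u a \<noteq> w a}) < eps * card (Pow ?J)}"
  have finB: "finite ?B"
    by (rule finite_subset[of _ "Pow ?J \<rightarrow>\<^sub>E UNIV"]) (auto intro: finite_PiE)
  have "inj_on (\<lambda>w'. restrict w' (Pow ?J)) ?ball"
    using bij_betw_imp_inj_on[OF bij_betw_restrict_Wper[OF I]] by (rule inj_on_subset) auto
  then have "card ?ball = card ((\<lambda>w'. restrict w' (Pow ?J)) ` ?ball)"
    by (simp add: card_image)
  also have "\<dots> \<le> card (\<Union>u\<in>?B. tree_orbit ?J u)"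
  proof (rule card_mono)
    show "finite (\<Union>u\<in>?B. tree_orbit ?J u)"
      using finB by (simp add: finite_tree_orbit)
    show "(\<lambda>w'. restrict w' (Pow ?J)) ` ?ball \<subseteq> (\<Union>u\<in>?B. tree_orbit ?J u)"
    proof (rule image_subsetI)
      fix w' assume "w' \<in> ?ball"
      then obtain u where "u \<in> ?B" "restrict w' (Pow ?J) \<in> tree_orbit ?J u"
        using dist_m_less_imp_tree_orbit[OF I w] by blast
      then show "restrict w' (Pow ?J) \<in> (\<Union>u\<in>?B. tree_orbit ?J u)" by blast
    qed
  qed
  also have "\<dots> \<le> (\<Sum>u\<in>?B. card (tree_orbit ?J u))"
    using finB by (rule card_UN_le)
  also have "\<dots> \<le> card ?B * K"
    using sum_mono[of ?B "\<lambda>u. card (tree_orbit ?J u)" "\<lambda>_. K"] orbit by simp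
  finally show ?thesis .
qed

section \<open>The entropy \<open>H_eps\<close> of a uniform measure\<close>

definition eps_partition ::
    "'a set \<Rightarrow> 'a pmf \<Rightarrow> ('a \<Rightarrow> 'a \<Rightarrow> real) \<Rightarrow> real \<Rightarrow> nat \<Rightarrow> (nat \<Rightarrow> 'a set) \<Rightarrow> bool" where
  "eps_partition X \<mu> d eps k P \<longleftrightarrow> (\<Union>i\<le>k. P i) = X \<and>
     (\<forall>i\<le>k. \<forall>j\<le>k. i \<noteq> j \<longrightarrow> P i \<inter> P j = {}) \<and>
     measure_pmf.prob \<mu> (P 0) < eps \<and> (\<forall>j\<in>{1..k}. diam_d d (P j) < eps)"

lemma H_eps_eq_log_Least:
  "H_eps X \<mu> d eps = log 2 (LEAST k. \<exists>P. eps_partition X \<mu> d eps k P)"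
  unfolding H_eps_def eps_partition_def ..

lemma le_diam_d:
  assumes "finite A" "x \<in> A" "y \<in> A"
  shows "d x y \<le> diam_d d A"
proof -
  have "bdd_above ((\<lambda>p. d (fst p) (snd p)) ` (A \<times> A))"
    using assms(1) by (intro bdd_above_finite) auto
  then have "d (fst (x, y)) (snd (x, y)) \<le> (SUP p \<in> A \<times> A. d (fst p) (snd p))"
    by (rule cSUP_upper[rotated]) (use assms in auto)
  then show ?thesis unfolding diam_d_def using assms by auto
qed

lemma eps_partition_singletons:
  assumes W: "finite W" "W \<subseteq> X" "W \<noteq> {}" and eps: "0 < eps"
    and d: "\<And>x. x \<in> W \<Longrightarrow> d x x < eps"
  shows "\<exists>P. eps_partition X (pmf_of_set W) d eps (card W) P"
proof -
  obtain h where h: "bij_betw h {1..card W} W"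
    using ex_bij_betw_nat_finite_1[OF W(1)] by blast
  define P where "P i = (if i = 0 then X - W else {h i})" for i
  have "{..card W} = insert 0 {1..card W}" by auto
  then have "(\<Union>i\<le>card W. P i) = (X - W) \<union> h ` {1..card W}"
    unfolding P_def by auto
  then have "(\<Union>i\<le>card W. P i) = X"
    using h W(2) unfolding bij_betw_def by auto
  moreover have "P i \<inter> P j = {}" if "i \<le> card W" "j \<le> card W" "i \<noteq> j" for i j
  proof -
    have "h i \<noteq> h j" if "i \<in> {1..card W}" "j \<in> {1..card W}" "i \<noteq> j" for i j
      using h that unfolding bij_betw_def inj_on_def by blast
    moreover have "h i \<in> W" if "i \<in> {1..card W}" for i
      using h that unfolding bij_betw_def by blast
    ultimately show ?thesis
      using that unfolding P_def by (cases "i = 0"; cases "j = 0") auto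
  qed
  moreover have "measure_pmf.prob (pmf_of_set W) (P 0) = 0"
    unfolding P_def using measure_pmf_of_set[OF W(3,1)] by simp
  moreover have "diam_d d (P j) < eps" if "j \<in> {1..card W}" for j
    using that d bij_betwE[OF h] unfolding P_def diam_d_def by auto
  ultimately have "eps_partition X (pmf_of_set W) d eps (card W) P"
    unfolding eps_partition_def using eps by simp
  then show ?thesis by blast
qed

lemma card_lt_eps_partition:
  fixes eps M :: real
  assumes X: "finite X" "W \<subseteq> X" "W \<noteq> {}"
    and ball: "\<And>w. w \<in> W \<Longrightarrow> real (card {w' \<in> W. d w w' < eps}) \<le> M"
    and P: "eps_partition X (pmf_of_set W) d eps k P"
  shows "real (card W) < eps * card W + k * M"
proof -
  have W: "finite W" using X finite_subset by blast
  have M: "0 \<le> M" using ball X(3) by force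
  have "(\<Union>i\<le>k. P i \<inter> W) = W"
    using P X(2) unfolding eps_partition_def by auto
  moreover have "card (\<Union>i\<le>k. P i \<inter> W) \<le> (\<Sum>i\<le>k. card (P i \<inter> W))"
    by (rule card_UN_le) simp
  moreover have "{..k} = insert 0 {1..k}" by auto
  ultimately have "card W \<le> card (P 0 \<inter> W) + (\<Sum>i\<in>{1..k}. card (P i \<inter> W))"
    by simp
  then have "real (card W) \<le> real (card (P 0 \<inter> W)) + (\<Sum>i\<in>{1..k}. real (card (P i \<inter> W)))"
    using of_nat_mono by fastforce
  moreover have "real (card (P 0 \<inter> W)) < eps * card W"
    using P measure_pmf_of_set[OF X(3) W, of "P 0"] W X(3) unfolding eps_partition_def
    by (simp add: Int_commute divide_less_eq card_gt_0_iff)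
  moreover have "real (card (P j \<inter> W)) \<le> M" if j: "j \<in> {1..k}" for j
  proof (cases "P j \<inter> W = {}")
    case False
    then obtain w where w: "w \<in> P j" "w \<in> W" by auto
    have "P j \<subseteq> X" using P j unfolding eps_partition_def by auto
    then have fin: "finite (P j)" using X(1) by (rule finite_subset)
    have "P j \<inter> W \<subseteq> {w' \<in> W. d w w' < eps}"
    proof
      fix w' assume w': "w' \<in> P j \<inter> W"
      then have "d w w' \<le> diam_d d (P j)" using le_diam_d[OF fin w(1)] by blast
      moreover have "diam_d d (P j) < eps" using P j unfolding eps_partition_def by blast
      ultimately show "w' \<in> {w' \<in> W. d w w' < eps}" using w' by auto
    qed
    then have "card (P j \<inter> W) \<le> card {w' \<in> W. d w w' < eps}"
      using W by (intro card_mono) auto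
    then show ?thesis using ball[OF w(2)] by linarith
  qed (use M in simp)
  then have "(\<Sum>i\<in>{1..k}. real (card (P i \<inter> W))) \<le> k * M"
    using sum_mono[of "{1..k}" "\<lambda>i. real (card (P i \<inter> W))" "\<lambda>_. M"] by simp
  ultimately show ?thesis by linarith
qed

lemma H_eps_pmf_of_set_bounds:
  fixes eps M :: real
  assumes X: "finite X" "W \<subseteq> X" "W \<noteq> {}" and eps: "0 < eps" "eps < 1"
    and d: "\<And>x. x \<in> W \<Longrightarrow> d x x < eps" and M: "0 < M"
    and ball: "\<And>w. w \<in> W \<Longrightarrow> real (card {w' \<in> W. d w w' < eps}) \<le> M"
  shows "log 2 ((1 - eps) * card W / M) \<le> H_eps X (pmf_of_set W) d eps"
    and "H_eps X (pmf_of_set W) d eps \<le> log 2 (card W)"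
proof -
  have W: "finite W" using X finite_subset by blast
  let ?P = "\<lambda>k. \<exists>P. eps_partition X (pmf_of_set W) d eps k P"
  define K where "K = (LEAST k. ?P k)"
  have ex: "?P (card W)"
    by (rule eps_partition_singletons[OF W X(2,3) eps(1) d])
  then have "?P K" and "K \<le> card W"
    unfolding K_def by (auto intro: LeastI Least_le)
  then have "(1 - eps) * card W < K * M"
    using card_lt_eps_partition[OF X ball] by (force simp: algebra_simps)
  then have lower: "(1 - eps) * card W / M < K"
    using M by (simp add: divide_less_eq)
  moreover have "0 < (1 - eps) * card W / M"
    using eps M W X(3) by (simp add: card_gt_0_iff)
  ultimately show "log 2 ((1 - eps) * card W / M) \<le> H_eps X (pmf_of_set W) d eps"
    unfolding H_eps_eq_log_Least K_def[symmetric] by simp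
  show "H_eps X (pmf_of_set W) d eps \<le> log 2 (card W)"
    unfolding H_eps_eq_log_Least K_def[symmetric]
    using lower \<open>0 < (1 - eps) * card W / M\<close> \<open>K \<le> card W\<close> by simp
qed

section \<open>The estimate for periodic words\<close>

lemma exists_chernoff_parameter:
  fixes q rho :: real
  assumes q: "0 \<le> q" and rho: "1 < rho"
  shows "\<exists>l eps0. 0 < l \<and> l \<le> 1 \<and> 0 < eps0 \<and>
    (\<forall>eps. 0 < eps \<and> eps < eps0 \<longrightarrow> l powr (- eps) * (1 + q * l) \<le> rho)"
proof -
  define l where "l = min 1 ((rho - 1) / (2 * (q + 1)))"
  have l: "0 < l" "l \<le> 1" unfolding l_def using q rho by auto
  have "q * l \<le> q * ((rho - 1) / (2 * (q + 1)))"
    unfolding l_def using q by (intro mult_left_mono) auto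
  also have "\<dots> < rho - 1"
  proof -
    have "q * 1 \<le> q * rho" using q rho by (intro mult_left_mono) auto
    then show ?thesis using q rho by (simp add: field_simps)
  qed
  finally have "1 + q * l < rho" by simp
  moreover have "((\<lambda>eps. l powr (- eps) * (1 + q * l)) \<longlongrightarrow> l powr (- 0) * (1 + q * l)) (at_right 0)"
    using l by (intro tendsto_intros) auto
  ultimately have "eventually (\<lambda>eps. l powr (- eps) * (1 + q * l) < rho) (at_right 0)"
    using l by (intro order_tendstoD(2)) auto
  then obtain eps0 where "0 < eps0"
    "\<forall>eps>0. eps < eps0 \<longrightarrow> l powr (- eps) * (1 + q * l) < rho"
    unfolding eventually_at_right_field by blast
  then show ?thesis using l by (meson less_imp_le)
qed

lemma card_dist_m_ball_Wper_le_power: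
  fixes w :: "nat set \<Rightarrow> 'q::finite" and eps l rho :: real
  assumes q: "CARD('q) \<ge> 2" and I: "I \<subseteq> {..<m}" and n: "2 \<le> m - card I"
    and w: "w \<in> Wper m (dgen (gen ` I))" and l: "0 < l" "l \<le> 1"
    and chernoff: "l powr (- eps) * (1 + CARD('q) * l) \<le> rho"
  shows "real (card {w' \<in> Wper m (dgen (gen ` I)). dist_m m w w' < eps})
    \<le> rho ^ 2 ^ (m - card I) * CARD('q) ^ (3 * 2 ^ (m - card I - 2))"
proof -
  let ?n = "m - card I" and ?J = "{..<m} - I"
  let ?B = "{u \<in> Pow ?J \<rightarrow>\<^sub>E UNIV. real (card {a \<in> Pow ?J. u a \<noteq> w a}) < eps * card (Pow ?J)}"
  have J: "card ?J = ?n" "card (Pow ?J) = 2 ^ ?n"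
    using I by (simp_all add: card_Diff_subset finite_subset card_Pow)
  have "card (tree_orbit ?J u) \<le> CARD('q) ^ (3 * 2 ^ (?n - 2))" for u :: "nat set \<Rightarrow> 'q"
    using card_tree_orbit_le_power[OF q _, of ?J u] n J by simp
  then have "card {w' \<in> Wper m (dgen (gen ` I)). dist_m m w w' < eps}
      \<le> card ?B * CARD('q) ^ (3 * 2 ^ (?n - 2))"
    by (rule card_dist_m_ball_Wper_le[OF I w])
  then have "real (card {w' \<in> Wper m (dgen (gen ` I)). dist_m m w w' < eps})
      \<le> real (card ?B) * CARD('q) ^ (3 * 2 ^ (?n - 2))"
    using of_nat_mono by fastforce
  also have "real (card ?B) \<le> rho ^ 2 ^ ?n"
  proof -
    have "l powr (- (eps * card (Pow ?J))) = (l powr (- eps)) ^ 2 ^ ?n"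
      using l J(2) by (simp add: powr_powr flip: powr_realpow)
    moreover have "real (card ?B)
        \<le> l powr (- (eps * card (Pow ?J))) * (1 + CARD('q) * l) ^ card (Pow ?J)"
      using l by (intro card_hamming_ball_le) auto
    ultimately have "real (card ?B) \<le> (l powr (- eps) * (1 + CARD('q) * l)) ^ 2 ^ ?n"
      using J(2) by (simp add: power_mult_distrib)
    also have "\<dots> \<le> rho ^ 2 ^ ?n"
      using chernoff l by (intro power_mono) auto
    finally show ?thesis .
  qed
  finally show ?thesis by (simp add: mult_right_mono)
qed

lemma powr_eighth_power_mult_power:
  fixes q :: real
  assumes "0 < q" "2 \<le> n"
  shows "(q powr (1/8)) ^ 2 ^ n * q ^ (3 * 2 ^ (n - 2)) = q powr (7/8 * 2 ^ n)"
proof -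
  have "n = (n - 2) + 2" using assms(2) by simp
  then have "(2::real) ^ n = 2 ^ (n - 2) * 2 ^ 2"
    by (metis power_add)
  moreover have "(q powr (1/8)) ^ 2 ^ n = q powr (2 ^ n / 8)"
    using assms(1) by (simp add: powr_power)
  moreover have "q ^ (3 * 2 ^ (n - 2)) = q powr (3 * 2 ^ (n - 2))"
    using assms(1) by (simp flip: powr_realpow)
  ultimately show ?thesis
    by (simp flip: powr_add)
qed

lemma H_eps_Wper_bounds:
  fixes eps l :: real
  assumes q: "CARD('q::finite) \<ge> 2" and I: "I \<subseteq> {..<m}" and n: "4 \<le> m - card I"
    and eps: "0 < eps" "eps \<le> 1/2" and l: "0 < l" "l \<le> 1"
    and chernoff: "l powr (- eps) * (1 + CARD('q) * l) \<le> CARD('q) powr (1/8)"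
  defines "H \<equiv> H_eps (words m :: (nat set \<Rightarrow> 'q) set)
    (pmf_of_set (Wper m (dgen (gen ` I)))) (dist_m m) eps"
  shows "1/16 * 2 ^ (m - card I) \<le> H" and "H \<le> log 2 CARD('q) * 2 ^ (m - card I)"
proof -
  let ?q = "real CARD('q)" and ?N = "(2::real) ^ (m - card I)"
  let ?W = "Wper m (dgen (gen ` I)) :: (nat set \<Rightarrow> 'q) set"
  define M where "M = ?q powr (7/8 * ?N)"
  have q0: "0 < ?q" and "0 < M" unfolding M_def using q by simp_all
  have W: "real (card ?W) = ?q powr ?N"
    using card_Wper[OF I] powr_realpow[OF q0, of "2 ^ (m - card I)"] by simp
  have ball: "real (card {w' \<in> ?W. dist_m m w w' < eps}) \<le> M" if "w \<in> ?W" for w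
    using card_dist_m_ball_Wper_le_power[OF q I _ that l chernoff] n
      powr_eighth_power_mult_power[OF q0, of "m - card I"] unfolding M_def by simp
  have refl: "dist_m m w w < eps" if "w \<in> ?W" for w
    using dist_m_self[OF subsetD[OF Wper_subset_words that]] eps by simp
  have "eps < 1" using eps by simp
  note bounds = H_eps_pmf_of_set_bounds[OF finite_words Wper_subset_words Wper_nonempty eps(1)
      \<open>eps < 1\<close> refl \<open>0 < M\<close> ball, folded H_def]
  have "?q powr (?N / 8) / 2 = 1/2 * ?q powr ?N / M"
    using q0 unfolding M_def by (simp add: field_simps flip: powr_add)
  also have "\<dots> \<le> (1 - eps) * card ?W / M"
    using eps \<open>0 < M\<close> W by (intro divide_right_mono mult_right_mono) auto
  finally have "log 2 (?q powr (?N / 8) / 2) \<le> log 2 ((1 - eps) * card ?W / M)"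
    using q0 by (intro log_mono) auto
  also have "\<dots> \<le> H" by (rule bounds(1))
  also have "log 2 (?q powr (?N / 8) / 2) = ?N / 8 * log 2 ?q - 1"
    using q0 by (simp add: log_divide log_powr)
  finally have "?N / 8 * log 2 ?q - 1 \<le> H" .
  moreover have "?N / 8 * 1 \<le> ?N / 8 * log 2 ?q"
    using q by (intro mult_left_mono) (auto simp: le_log_iff)
  moreover have "16 \<le> ?N"
    using power_increasing[of 4 "m - card I" "2::real"] n by simp
  ultimately show "1/16 * ?N \<le> H" by linarith
  show "H \<le> log 2 ?q * ?N"
    using bounds(2) W q0 by (simp add: log_powr mult.commute)
qed

theorem lemma17:
  assumes "CARD('q::finite) \<ge> 2"
  shows "\<exists>eps0 > 0. \<forall>eps. 0 < eps \<and> eps < eps0 \<longrightarrow>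
     (\<exists>c C N. 0 < c \<and> c \<le> C \<and>
        (\<forall>m r I. r \<le> m \<and> I \<subseteq> {..<m} \<and> card I = r \<and> N \<le> m - r \<longrightarrow>
           (let H = H_eps (words m :: (nat set \<Rightarrow> 'q) set)
                      (pmf_of_set (Wper m (dgen (gen ` I)))) (dist_m m) eps
            in c * 2 ^ (m - r) \<le> H \<and> H \<le> C * 2 ^ (m - r))))"
proof -
  let ?q = "real CARD('q)"
  have "1 < ?q powr (1/8)" using assms by (intro gr_one_powr) auto
  then obtain l eps1 where l: "0 < l" "l \<le> 1" and "0 < eps1"
    and chernoff: "\<And>eps. 0 < eps \<Longrightarrow> eps < eps1 \<Longrightarrow> l powr (- eps) * (1 + ?q * l) \<le> ?q powr (1/8)"
    using exists_chernoff_parameter[of ?q "?q powr (1/8)"] by auto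
  have "1 \<le> log 2 ?q" using assms by (simp add: le_log_iff)
  then have "1/16 \<le> log 2 ?q" by linarith
  show ?thesis
  proof (rule exI[of _ "min eps1 (1/2)"], intro conjI allI impI)
    fix eps :: real assume "0 < eps \<and> eps < min eps1 (1/2)"
    then show "\<exists>c C N. 0 < c \<and> c \<le> C \<and>
        (\<forall>m r I. r \<le> m \<and> I \<subseteq> {..<m} \<and> card I = r \<and> N \<le> m - r \<longrightarrow>
           (let H = H_eps (words m :: (nat set \<Rightarrow> 'q) set)
                      (pmf_of_set (Wper m (dgen (gen ` I)))) (dist_m m) eps
            in c * 2 ^ (m - r) \<le> H \<and> H \<le> C * 2 ^ (m - r)))"
      using H_eps_Wper_bounds[OF assms _ _ _ _ l chernoff] \<open>1/16 \<le> log 2 ?q\<close>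
      by (intro exI[of _ "1/16"] exI[of _ "log 2 ?q"] exI[of _ 4]) (auto simp: Let_def)
  qed (use \<open>0 < eps1\<close> in simp)
qed

end
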